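(* Let $(X,\mathcal{A},\mu)$ be a probability space and let $\{E_i\}_{i\in\mathbb{N}}$ be a sequence of sets in $\mathcal{A}$. Suppose that $$\sum_{i=1}^\infty \mu(E_i)=\infty,$$ and that there exists a constant $C>0$ such that $$\sum_{s,t=1}^Q \mu(E_s\cap E_t)\le C\Big(\sum_{s=1}^Q\mu(E_s)\Big)^2\quad\text{for infinitely many }Q\in\mathbb{N}.$$ Suppose in addition that condition (M1) holds. Then $\mu(E_\infty)=1$.
   Context: $E_\infty:=\limsup_{i\to\infty}E_i=\bigcap_{t=1}^\infty\bigcup_{i=t}^\infty E_i$. Condition (M1): for every $\delta>0$ and all natural numbers $q_1<q_2$ there exists $i_0=i_0(q_1,q_2,\delta)$ such that for all $i\ge i_0$, $$\mu(A\cap E_i)\le(1+\delta)\mu(A)\mu(E_i),\qquad\text{where } A=\bigcup_{j=q_1}^{q_2}E_j.$$ *)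

theory Defs
  imports "HOL-Probability.Probability"
begin

definition limsup_set :: "(nat \<Rightarrow> 'a set) \<Rightarrow> 'a set" where
  "limsup_set E = (\<Inter>t\<in>{1..}. \<Union>i\<in>{t..}. E i)"

definition cond_M1 :: "'a measure \<Rightarrow> (nat \<Rightarrow> 'a set) \<Rightarrow> bool" where
  "cond_M1 M E \<longleftrightarrow>
    (\<forall>\<delta>>0. \<forall>q1 q2::nat. 1 \<le> q1 \<and> q1 < q2 \<longrightarrow>
      (\<exists>i0. \<forall>i\<ge>i0.
         measure M ((\<Union>j\<in>{q1..q2}. E j) \<inter> E i)
           \<le> (1 + \<delta>) * measure M (\<Union>j\<in>{q1..q2}. E j) * measure M (E i)))"

end

theory Submission
  imports Defs
begin

text \<open>If \<open>\<mu>(\<Union>j\<ge>q. E\<^sub>j) = a < 1\<close>, choose a finite block \<open>B = E\<^sub>q \<union> \<dots> \<union> E\<^sub>q\<^sub>2\<close> nearly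
  exhausting this tail. By (M1), every late set \<open>E\<^sub>i\<close> keeps a proportion \<open>\<kappa> = (1 - a)/2\<close>
  of its measure outside \<open>B\<close>, so the Chung--Erd\H{o}s inequality for the sets \<open>E\<^sub>i - B\<close>,
  together with the divergence of \<open>\<Sum>\<mu>(E\<^sub>i)\<close> and the quasi-independence bound, shows that
  the tail escapes \<open>B\<close> with measure at least \<open>\<kappa>\<^sup>2/(4C)\<close>, contradicting the choice of
  \<open>B\<close>. Hence every tail union has full measure, and so has their intersection.\<close>

lemma quadratic_nonneg_imp_square_le:
  fixes a b c :: real
  assumes "c \<ge> 0" and "\<And>l. 0 \<le> c * l\<^sup>2 - 2 * b * l + a"
  shows "b\<^sup>2 \<le> a * c"
proof (cases "c = 0")
  case True
  have "b = 0"
  proof (rule ccontr)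
    assume "b \<noteq> 0"
    from assms(2)[of "(a + 1) / (2 * b)"] True \<open>b \<noteq> 0\<close> show False
      by (simp add: field_simps)
  qed
  with True show ?thesis by simp
next
  case False
  with assms(1) have "c > 0" by simp
  from assms(2)[of "b / c"] have "0 \<le> a - b\<^sup>2 / c"
    using \<open>c > 0\<close> by (simp add: field_simps power2_eq_square)
  with \<open>c > 0\<close> show ?thesis by (simp add: field_simps)
qed

text \<open>With \<open>S = (\<Sum>i\<in>I. indicator (F i))\<close> and \<open>U\<close> its support, the proof expands
  \<open>0 \<le> \<integral>(S - l \<cdot> indicator U)\<^sup>2\<close> into a quadratic in \<open>l\<close>.\<close>

lemma (in finite_measure) Chung_Erdos_inequality:
  assumes "finite I" and F: "\<And>i. i \<in> I \<Longrightarrow> F i \<in> sets M"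
  shows "(\<Sum>i\<in>I. measure M (F i))\<^sup>2
           \<le> (\<Sum>s\<in>I. \<Sum>t\<in>I. measure M (F s \<inter> F t)) * measure M (\<Union>i\<in>I. F i)"
proof -
  define U where "U = (\<Union>i\<in>I. F i)"
  define S where "S x = (\<Sum>i\<in>I. indicator (F i) x :: real)" for x
  have U: "U \<in> sets M"
    unfolding U_def using assms by auto
  have integrable_indicator: "integrable M (indicator A :: 'a \<Rightarrow> real)" if "A \<in> sets M" for A
    using that by (simp add: integrable_indicator_iff less_top[symmetric])
  have S_square: "S x * S x = (\<Sum>s\<in>I. \<Sum>t\<in>I. indicator (F s \<inter> F t) x)" for x
    unfolding S_def sum_product by (simp add: indicator_inter_arith)
  have int_S: "integrable M S" and int_S_square: "integrable M (\<lambda>x. S x * S x)"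
    unfolding S_square unfolding S_def using F integrable_indicator by auto
  have integral_S: "integral\<^sup>L M S = (\<Sum>i\<in>I. measure M (F i))"
    unfolding S_def using F integrable_indicator by (simp add: Int_absorb2 sets.sets_into_space)
  have integral_S_square:
    "integral\<^sup>L M (\<lambda>x. S x * S x) = (\<Sum>s\<in>I. \<Sum>t\<in>I. measure M (F s \<inter> F t))"
    unfolding S_square using F integrable_indicator
    by (simp add: Int_absorb2 sets.sets_into_space sets.Int)
  have integral_U: "integral\<^sup>L M (indicator U :: 'a \<Rightarrow> real) = measure M U"
    using U by (simp add: Int_absorb2 sets.sets_into_space)
  have "S x * indicator U x = S x" for x
    by (auto simp: S_def U_def indicator_def intro!: sum.neutral)
  then have expand: "(S x - l * indicator U x)\<^sup>2 = (S x * S x - 2 * l * S x) + l\<^sup>2 * indicator U x" for l x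
    by (auto simp: power2_eq_square algebra_simps indicator_def)
  have "0 \<le> measure M U * l\<^sup>2 - 2 * (\<Sum>i\<in>I. measure M (F i)) * l
              + (\<Sum>s\<in>I. \<Sum>t\<in>I. measure M (F s \<inter> F t))" for l
  proof -
    have "0 \<le> integral\<^sup>L M (\<lambda>x. (S x - l * indicator U x)\<^sup>2)"
      by (simp add: integral_nonneg)
    also have "\<dots> = integral\<^sup>L M (\<lambda>x. S x * S x) - 2 * l * integral\<^sup>L M S
                     + l\<^sup>2 * integral\<^sup>L M (indicator U)"
      unfolding expand using int_S int_S_square integrable_indicator[OF U] by simp
    finally show ?thesis
      unfolding integral_S integral_S_square integral_U by (simp add: algebra_simps)
  qed
  then show ?thesis
    unfolding U_def by (intro quadratic_nonneg_imp_square_le) auto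
qed

lemma (in finite_measure) Chung_Erdos_inequality_Diff:
  assumes "finite I" and E: "\<And>i. i \<in> I \<Longrightarrow> E i \<in> sets M" and "B \<in> sets M"
    and "\<kappa> \<ge> 0" and large_outside: "\<And>i. i \<in> I \<Longrightarrow> \<kappa> * measure M (E i) \<le> measure M (E i - B)"
  shows "(\<kappa> * (\<Sum>i\<in>I. measure M (E i)))\<^sup>2
           \<le> (\<Sum>s\<in>I. \<Sum>t\<in>I. measure M (E s \<inter> E t)) * measure M ((\<Union>i\<in>I. E i) - B)"
proof -
  have "(\<kappa> * (\<Sum>i\<in>I. measure M (E i)))\<^sup>2 \<le> (\<Sum>i\<in>I. measure M (E i - B))\<^sup>2"
    using \<open>\<kappa> \<ge> 0\<close> large_outside
    by (intro power_mono) (auto simp: sum_distrib_left intro: sum_mono sum_nonneg)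
  also have "\<dots> \<le> (\<Sum>s\<in>I. \<Sum>t\<in>I. measure M ((E s - B) \<inter> (E t - B))) * measure M (\<Union>i\<in>I. E i - B)"
    using assms by (intro Chung_Erdos_inequality) auto
  also have "(\<Union>i\<in>I. E i - B) = (\<Union>i\<in>I. E i) - B"
    by blast
  also have "(\<Sum>s\<in>I. \<Sum>t\<in>I. measure M ((E s - B) \<inter> (E t - B)))
           \<le> (\<Sum>s\<in>I. \<Sum>t\<in>I. measure M (E s \<inter> E t))"
    using E by (intro sum_mono finite_measure_mono) auto
  finally show ?thesis
    by (simp add: mult_right_mono)
qed

lemma (in finite_measure) measure_Diff_ge_of_measure_Int_le:
  assumes "A \<in> sets M" and "B \<in> sets M" and "measure M (B \<inter> A) \<le> c * measure M A"
  shows "(1 - c) * measure M A \<le> measure M (A - B)"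
  using assms finite_measure_Diff'[of A B] by (simp add: Int_commute algebra_simps)

lemma (in finite_measure) eventually_measure_UN_atLeastAtMost_gt:
  assumes "\<And>j. E j \<in> sets M" and "x < measure M (\<Union>j\<in>{q..}. E j)"
  shows "\<forall>\<^sub>F n in sequentially. x < measure M (\<Union>j\<in>{q..n}. E j)"
proof (rule order_tendstoD(1)[OF _ assms(2)])
  have "(\<Union>n. \<Union>j\<in>{q..n}. E j) = (\<Union>j\<in>{q..}. E j)"
    by fastforce
  moreover have "incseq (\<lambda>n. \<Union>j\<in>{q..n}. E j)"
    by (rule monoI) fastforce
  ultimately show "(\<lambda>n. measure M (\<Union>j\<in>{q..n}. E j)) \<longlonglongrightarrow> measure M (\<Union>j\<in>{q..}. E j)"
    using finite_Lim_measure_incseq[of "\<lambda>n. \<Union>j\<in>{q..n}. E j"] assms(1) by fastforce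
qed

lemma eventually_partial_sums_gt:
  fixes f :: "nat \<Rightarrow> real"
  assumes nonneg: "\<And>i. f i \<ge> 0" and diverges: "(\<Sum>i. ennreal (f (Suc i))) = \<infinity>"
  shows "\<forall>\<^sub>F Q in sequentially. L < (\<Sum>s\<in>{1..Q}. f s)"
proof -
  have "\<exists>N. L < (\<Sum>s\<in>{1..N}. f s)"
  proof (rule ccontr)
    assume "\<nexists>N. L < (\<Sum>s\<in>{1..N}. f s)"
    then have "(\<Sum>i<n. f (Suc i)) \<le> L" for n
      using sum.atLeast1_atMost_eq[of f n] by (metis One_nat_def not_less)
    then have "summable (\<lambda>i. f (Suc i))"
      by (rule summableI_nonneg_bounded[OF nonneg])
    then have "(\<Sum>i. ennreal (f (Suc i))) = ennreal (\<Sum>i. f (Suc i))"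
      using suminf_ennreal2[of "\<lambda>i. f (Suc i)"] nonneg by blast
    with diverges show False by simp
  qed
  then obtain N where N: "L < (\<Sum>s\<in>{1..N}. f s)" ..
  have "(\<Sum>s\<in>{1..N}. f s) \<le> (\<Sum>s\<in>{1..Q}. f s)" if "Q \<ge> N" for Q
    using that nonneg by (intro sum_mono2) auto
  with N show ?thesis
    unfolding eventually_at_top_linorder by (meson order_less_le_trans)
qed

lemma (in prob_space) measure_tail_Diff_ge:
  fixes C :: real
  assumes E: "\<And>i. E i \<in> events"
    and diverges: "(\<Sum>i. ennreal (prob (E (Suc i)))) = \<infinity>"
    and "C > 0"
    and quasi_independent: "\<exists>\<^sub>\<infinity>Q. (\<Sum>s\<in>{1..Q}. \<Sum>t\<in>{1..Q}. prob (E s \<inter> E t))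
                                    \<le> C * (\<Sum>s\<in>{1..Q}. prob (E s))\<^sup>2"
    and B: "B \<in> events" and "\<kappa> > 0"
    and large_outside: "\<And>i. i \<ge> i0 \<Longrightarrow> \<kappa> * prob (E i) \<le> prob (E i - B)"
  shows "\<kappa>\<^sup>2 / (4 * C) \<le> prob ((\<Union>j\<in>{q..}. E j) - B)"
proof -
  define m where "m = max (max i0 q) 1"
  define K where "K = (\<Sum>s\<in>{1..<m}. prob (E s))"
  have "\<forall>\<^sub>F Q in sequentially. 2 * K < (\<Sum>s\<in>{1..Q}. prob (E s))"
    by (rule eventually_partial_sums_gt[OF _ diverges]) simp
  then have "\<exists>\<^sub>F Q in sequentially.
      (\<Sum>s\<in>{1..Q}. \<Sum>t\<in>{1..Q}. prob (E s \<inter> E t)) \<le> C * (\<Sum>s\<in>{1..Q}. prob (E s))\<^sup>2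
      \<and> m \<le> Q \<and> 2 * K < (\<Sum>s\<in>{1..Q}. prob (E s))"
    using quasi_independent eventually_ge_at_top[of m]
    by (intro frequently_eventually_frequently eventually_conj) (simp_all add: cofinite_eq_sequentially)
  then obtain Q where
    QC: "(\<Sum>s\<in>{1..Q}. \<Sum>t\<in>{1..Q}. prob (E s \<inter> E t)) \<le> C * (\<Sum>s\<in>{1..Q}. prob (E s))\<^sup>2"
    and "m \<le> Q" and T_large: "2 * K < (\<Sum>s\<in>{1..Q}. prob (E s))"
    by (auto dest: frequently_ex)
  define T where "T = (\<Sum>s\<in>{1..Q}. prob (E s))"
  define R where "R = (\<Sum>s\<in>{m..Q}. prob (E s))"
  have "{1..Q} = {1..<m} \<union> {m..Q}"
    using \<open>m \<le> Q\<close> by (auto simp: m_def)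
  then have "T = K + R"
    unfolding T_def K_def R_def by (simp add: sum.union_disjoint[symmetric] ivl_disj_int)
  moreover have "K \<ge> 0"
    unfolding K_def by (simp add: sum_nonneg)
  ultimately have "T / 2 \<le> R" and "T > 0"
    using T_large unfolding T_def by linarith+
  have "\<kappa>\<^sup>2 * T\<^sup>2 / 4 = (\<kappa> * (T / 2))\<^sup>2"
    by (simp add: power_mult_distrib power_divide)
  also have "\<dots> \<le> (\<kappa> * R)\<^sup>2"
    using \<open>T / 2 \<le> R\<close> \<open>T > 0\<close> \<open>\<kappa> > 0\<close> by (intro power_mono) auto
  also have "\<dots> \<le> (\<Sum>s\<in>{m..Q}. \<Sum>t\<in>{m..Q}. prob (E s \<inter> E t)) * prob ((\<Union>i\<in>{m..Q}. E i) - B)"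
    unfolding R_def using E B \<open>\<kappa> > 0\<close> large_outside
    by (intro Chung_Erdos_inequality_Diff) (auto simp: m_def)
  also have "\<dots> \<le> C * T\<^sup>2 * prob ((\<Union>j\<in>{q..}. E j) - B)"
  proof (intro mult_mono)
    have "(\<Sum>s\<in>{m..Q}. \<Sum>t\<in>{m..Q}. prob (E s \<inter> E t)) \<le> (\<Sum>s\<in>{1..Q}. \<Sum>t\<in>{1..Q}. prob (E s \<inter> E t))"
      by (intro order_trans[OF sum_mono sum_mono2] sum_mono2 sum_nonneg) (auto simp: m_def)
    with QC show "(\<Sum>s\<in>{m..Q}. \<Sum>t\<in>{m..Q}. prob (E s \<inter> E t)) \<le> C * T\<^sup>2"
      unfolding T_def by linarith
    show "prob ((\<Union>i\<in>{m..Q}. E i) - B) \<le> prob ((\<Union>j\<in>{q..}. E j) - B)"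
      using E B by (intro finite_measure_mono) (auto simp: m_def)
  qed (use \<open>C > 0\<close> in auto)
  finally show ?thesis
    using \<open>C > 0\<close> \<open>T > 0\<close> by (simp add: field_simps)
qed

lemma (in prob_space) prob_UN_atLeast_eq_1:
  fixes C :: real
  assumes E: "\<And>i. E i \<in> events"
    and "(\<Sum>i. ennreal (prob (E (Suc i)))) = \<infinity>"
    and "C > 0"
    and "\<exists>\<^sub>\<infinity>Q. (\<Sum>s\<in>{1..Q}. \<Sum>t\<in>{1..Q}. prob (E s \<inter> E t))
                 \<le> C * (\<Sum>s\<in>{1..Q}. prob (E s))\<^sup>2"
    and M1: "cond_M1 M E" and "q \<ge> 1"
  shows "prob (\<Union>j\<in>{q..}. E j) = 1"
proof -
  define U where "U = (\<Union>j\<in>{q..}. E j)"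
  have U: "U \<in> events"
    unfolding U_def using E by auto
  show ?thesis
  proof (rule ccontr)
    assume "prob (\<Union>j\<in>{q..}. E j) \<noteq> 1"
    with prob_le_1[of U] have "prob U < 1"
      unfolding U_def by linarith
    define \<kappa> where "\<kappa> = (1 - prob U) / 2"
    have "\<kappa> > 0"
      using \<open>prob U < 1\<close> unfolding \<kappa>_def by simp
    then have "prob U - \<kappa>\<^sup>2 / (4 * C) < prob U"
      using \<open>C > 0\<close> by simp
    then have "\<forall>\<^sub>F n in sequentially. q < n \<and> prob U - \<kappa>\<^sup>2 / (4 * C) < prob (\<Union>j\<in>{q..n}. E j)"
      unfolding U_def using E by (intro eventually_conj eventually_gt_at_top eventually_measure_UN_atLeastAtMost_gt)
    then obtain q2 where "q < q2" and B_large: "prob U - \<kappa>\<^sup>2 / (4 * C) < prob (\<Union>j\<in>{q..q2}. E j)"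
      using eventually_happens'[OF sequentially_bot] by blast
    define B where "B = (\<Union>j\<in>{q..q2}. E j)"
    have B: "B \<in> events" and "B \<subseteq> U"
      unfolding B_def U_def using E by auto
    from M1 \<open>\<kappa> > 0\<close> \<open>q \<ge> 1\<close> \<open>q < q2\<close> obtain i0
      where i0: "\<And>i. i \<ge> i0 \<Longrightarrow> prob (B \<inter> E i) \<le> (1 + \<kappa>) * prob B * prob (E i)"
      unfolding cond_M1_def B_def by blast
    have "\<kappa> \<le> 1 - (1 + \<kappa>) * prob B"
    proof -
      have "(1 + \<kappa>) * prob B \<le> (1 + \<kappa>) * prob U"
        using \<open>\<kappa> > 0\<close> \<open>B \<subseteq> U\<close> U by (intro mult_left_mono finite_measure_mono) auto
      also have "\<dots> \<le> 1 - \<kappa>"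
        using zero_le_power2[of "1 - prob U"] unfolding \<kappa>_def by (simp add: field_simps power2_eq_square)
      finally show ?thesis by simp
    qed
    have "\<kappa> * prob (E i) \<le> prob (E i - B)" if "i \<ge> i0" for i
    proof -
      have "\<kappa> * prob (E i) \<le> (1 - (1 + \<kappa>) * prob B) * prob (E i)"
        using \<open>\<kappa> \<le> 1 - (1 + \<kappa>) * prob B\<close> by (intro mult_right_mono) auto
      also have "\<dots> \<le> prob (E i - B)"
        using E B i0[OF that] by (intro measure_Diff_ge_of_measure_Int_le) auto
      finally show ?thesis .
    qed
    then have "\<kappa>\<^sup>2 / (4 * C) \<le> prob (U - B)"
      unfolding U_def using assms B \<open>\<kappa> > 0\<close> by (intro measure_tail_Diff_ge) auto
    also have "\<dots> = prob U - prob B"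
      using U B \<open>B \<subseteq> U\<close> by (rule finite_measure_Diff)
    finally show False
      using B_large unfolding B_def by linarith
  qed
qed

theorem theorem1:
  fixes M :: "'a measure" and E :: "nat \<Rightarrow> 'a set" and C :: real
  assumes "prob_space M"
    and "\<And>i. E i \<in> sets M"
    and "(\<Sum>i. ennreal (measure M (E (Suc i)))) = \<infinity>"
    and "C > 0"
    and "\<exists>\<^sub>\<infinity>Q. (\<Sum>s\<in>{1..Q}. \<Sum>t\<in>{1..Q}. measure M (E s \<inter> E t))
                 \<le> C * (\<Sum>s\<in>{1..Q}. measure M (E s))^2"
    and "cond_M1 M E"
  shows "measure M (limsup_set E) = 1"
proof -
  interpret prob_space M by fact
  have limsup: "limsup_set E = (\<Inter>q. \<Union>j\<in>{Suc q..}. E j)"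
    unfolding limsup_set_def by (auto, metis Suc_pred' atLeast_iff less_eq_Suc_le)
  have "prob (\<Union>j\<in>{Suc q..}. E j) = 1" for q
    using assms(2-6) by (intro prob_UN_atLeast_eq_1) auto
  then have "AE x in M. x \<in> (\<Union>j\<in>{Suc q..}. E j)" for q
    using assms(2) by (subst prob_eq_1[symmetric]) auto
  then have "AE x in M. x \<in> limsup_set E"
    unfolding limsup by (simp add: AE_all_countable)
  then show ?thesis
    unfolding limsup using assms(2) by (subst prob_eq_1) auto
qed

end
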